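(* Let $\mathcal{G}$ be an $A$-compatible multidigraph. (i) Let $\zeta$ be a spanning forest of $\mathcal{G}$ and $\tau$ a connected component of $\zeta$. If $\tau$ contains a node in $\mathcal{N}_i$ for some $i\ge0$, then the root of $\tau$ is in $\mathcal{N}_i\cup\mathcal{N}_0$. (ii) For $B\subseteq\mathcal{N}$ with $|B|=|F|$, $\Theta_\mathcal{G}(F,B)=\emptyset$ if $B$ contains two elements of $\mathcal{N}_i$ for some $i>0$.
   Context: $R$ is a partially ordered commutative ring. Let $d\ge0$, $m_0,m_1,\dots,m_d$ nonnegative integers with $m=m_0+m_1+\cdots+m_d$. $A\in R^{m\times m}$ and $b\in R^m$ have block form: for $i=1,\dots,d$ the rows with indices in $\mathcal{N}_i=\{1+\sum_{j<i}m_j,\dots,\sum_{j\le i}m_j\}$ have the form $(0\cdots0\ A_i\ 0\cdots0)$ with $A_i\in R^{m_i\times m_i}$ occupying the columns indexed by $\mathcal{N}_i$, and the corresponding part $b^i$ of $b$ has at most one nonzero entry; the last $m_0$ rows form an arbitrary $A_0\in R^{m_0\times m}$ with arbitrary $b^0\in R^{m_0}$. Let $\mathcal{N}=\{1,\dots,m+1\}$ and $\mathcal{N}_0=\{m-m_0+1,\dots,m+1\}$. Fix $j_i\in\mathcal{N}_i$ ($i=1,\dots,d$) such that $b_j=0$ for all $j\le m-m_0$ with $j\notin\{j_1,\dots,j_d\}$, and let $F=\{j_1,\dots,j_d,m+1\}$. A multidigraph $\mathcal{G}=(\mathcal{N},\mathcal{E})$ has source/target maps $s,t$, no self-loops, labeling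 $\pi\colon\mathcal{E}\to R$, and Laplacian $L_{ij}=\sum_{e:s(e)=j,t(e)=i}\pi(e)$ ($i\ne j$), $L_{ii}=-\sum_{k\ne i}L_{ki}$. $\mathcal{G}$ is $A$-compatible if (i) there is no edge from a node in $\mathcal{N}_i$ ($i\ge0$) to a node in $\mathcal{N}_j$ with $i\ne j$, $j\ge1$; (ii) for $\ell\notin\{j_1,\dots,j_d,m+1\}$, the $\ell$-th row of $L$ equals the $\ell$-th row of the $m\times(m+1)$ matrix $(A\,|\,b)$. Trees/forests: subgraphs whose underlying undirected graph is acyclic (connected for trees); a tree is rooted at $N$ if $N$ is its only node without outgoing edges; spanning means node set $\mathcal{N}$. For $F,B\subseteq\mathcal{N}$ with $|F|=|B|$, $\Theta_\mathcal{G}(F,B)$ is the set of spanning forests with $|B|$ components, each containing a node of $F$ and being a tree rooted at a node of $B$. *)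

theory Defs
  imports Main "Graph_Theory.Digraph_Component"
begin

definition uadj :: "('v,'e) pre_digraph \<Rightarrow> ('v \<times> 'v) set" where
  "uadj H = {(u,v). \<exists>e\<in>arcs H. (tail H e = u \<and> head H e = v) \<or> (tail H e = v \<and> head H e = u)}"

definition uconnected :: "('v,'e) pre_digraph \<Rightarrow> bool" where
  "uconnected H \<longleftrightarrow> (\<forall>u\<in>verts H. \<forall>v\<in>verts H. (u,v) \<in> (uadj H)\<^sup>*)"

text \<open>An undirected cycle of a multigraph: a nonempty list of pairwise distinct arcs
  es together with a closed vertex sequence vs (vs!0 = last vs, the other vertices
  pairwise distinct) such that arc es!k joins vs!k and vs!(k+1) in some orientation.
  (Two distinct parallel arcs form a cycle of length 2.)\<close>
definition ucycle :: "('v,'e) pre_digraph \<Rightarrow> 'e list \<Rightarrow> 'v list \<Rightarrow> bool" where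
  "ucycle H es vs \<longleftrightarrow> es \<noteq> [] \<and> distinct es \<and> set es \<subseteq> arcs H \<and>
     length vs = Suc (length es) \<and> hd vs = last vs \<and> distinct (tl vs) \<and>
     (\<forall>k<length es. (tail H (es!k) = vs!k \<and> head H (es!k) = vs!Suc k) \<or>
                     (tail H (es!k) = vs!Suc k \<and> head H (es!k) = vs!k))"

definition uacyclic :: "('v,'e) pre_digraph \<Rightarrow> bool" where
  "uacyclic H \<longleftrightarrow> \<not> (\<exists>es vs. ucycle H es vs)"

definition uforest :: "('v,'e) pre_digraph \<Rightarrow> bool" where
  "uforest H \<longleftrightarrow> uacyclic H"

definition utree :: "('v,'e) pre_digraph \<Rightarrow> bool" where
  "utree H \<longleftrightarrow> uacyclic H \<and> uconnected H"

definition rooted_tree :: "('v,'e) pre_digraph \<Rightarrow> 'v \<Rightarrow> bool" where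
  "rooted_tree H r \<longleftrightarrow> utree H \<and> r \<in> verts H \<and> out_arcs H r = {} \<and>
     (\<forall>v\<in>verts H. v \<noteq> r \<longrightarrow> out_arcs H v \<noteq> {})"

definition spanning_forest :: "('v,'e) pre_digraph \<Rightarrow> ('v,'e) pre_digraph \<Rightarrow> bool" where
  "spanning_forest Z G \<longleftrightarrow> spanning Z G \<and> uforest Z"

definition ucomponents :: "('v,'e) pre_digraph \<Rightarrow> ('v,'e) pre_digraph set" where
  "ucomponents H = {H \<restriction> {v \<in> verts H. (u,v) \<in> (uadj H)\<^sup>*} | u. u \<in> verts H}"

definition Theta :: "('v,'e) pre_digraph \<Rightarrow> 'v set \<Rightarrow> 'v set \<Rightarrow> ('v,'e) pre_digraph set" where
  "Theta G F B = {Z. spanning_forest Z G \<and> card (ucomponents Z) = card B \<and>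
      (\<forall>T\<in>ucomponents Z. (\<exists>f\<in>F. f \<in> verts T) \<and> (\<exists>r\<in>B. rooted_tree T r))}"

definition msum :: "nat \<Rightarrow> (nat \<Rightarrow> nat) \<Rightarrow> nat" where
  "msum d ms = (\<Sum>j\<le>d. ms j)"

text \<open>Index sets: N_i for 1 \<le> i \<le> d (blocks 1..d come first),
  N_0 = {m - m_0 + 1, ..., m + 1}.\<close>
definition Nblk :: "nat \<Rightarrow> (nat \<Rightarrow> nat) \<Rightarrow> nat \<Rightarrow> nat set" where
  "Nblk d ms i = (if i = 0 then {msum d ms - ms 0 + 1 .. msum d ms + 1}
                  else {1 + (\<Sum>j\<in>{1..<i}. ms j) .. (\<Sum>j\<in>{1..i}. ms j)})"

definition laplacian :: "('v,'e) pre_digraph \<Rightarrow> ('e \<Rightarrow> 'a::comm_ring) \<Rightarrow> 'v \<Rightarrow> 'v \<Rightarrow> 'a" where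
  "laplacian G \<pi> i j = (if i \<noteq> j then (\<Sum>e\<in>{e\<in>arcs G. tail G e = j \<and> head G e = i}. \<pi> e)
      else - (\<Sum>k\<in>verts G - {i}. (\<Sum>e\<in>{e\<in>arcs G. tail G e = i \<and> head G e = k}. \<pi> e)))"

definition block_form :: "nat \<Rightarrow> (nat \<Rightarrow> nat) \<Rightarrow> (nat \<Rightarrow> nat \<Rightarrow> 'a::comm_ring) \<Rightarrow> (nat \<Rightarrow> 'a) \<Rightarrow> bool" where
  "block_form d ms A b \<longleftrightarrow>
     (\<forall>i\<in>{1..d}. \<forall>l\<in>Nblk d ms i. \<forall>k\<in>{1..msum d ms}. k \<notin> Nblk d ms i \<longrightarrow> A l k = 0) \<and>
     (\<forall>i\<in>{1..d}. \<forall>k\<in>Nblk d ms i. \<forall>k'\<in>Nblk d ms i. b k \<noteq> 0 \<longrightarrow> b k' \<noteq> 0 \<longrightarrow> k = k')"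

definition Fset :: "nat \<Rightarrow> (nat \<Rightarrow> nat) \<Rightarrow> (nat \<Rightarrow> nat) \<Rightarrow> nat set" where
  "Fset d ms js = js ` {1..d} \<union> {msum d ms + 1}"

definition A_compatible :: "nat \<Rightarrow> (nat \<Rightarrow> nat) \<Rightarrow> (nat \<Rightarrow> nat) \<Rightarrow> (nat \<Rightarrow> nat \<Rightarrow> 'a::comm_ring) \<Rightarrow> (nat \<Rightarrow> 'a)
     \<Rightarrow> (nat,'e) pre_digraph \<Rightarrow> ('e \<Rightarrow> 'a) \<Rightarrow> bool" where
  "A_compatible d ms js A b G \<pi> \<longleftrightarrow>
     (\<forall>e\<in>arcs G. \<forall>i\<in>{0..d}. \<forall>j\<in>{1..d}. i \<noteq> j \<longrightarrow>
         \<not> (tail G e \<in> Nblk d ms i \<and> head G e \<in> Nblk d ms j)) \<and>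
     (\<forall>l\<in>{1..msum d ms}. l \<notin> Fset d ms js \<longrightarrow>
        (\<forall>k\<in>{1..msum d ms + 1}.
           laplacian G \<pi> l k = (if k \<le> msum d ms then A l k else b l)))"

end

theory Submission
  imports Defs
begin

text \<open>A rooted tree has no undirected cycle, so its root must lie in every finite vertex set S
  that meets the tree and is not left by any arc: otherwise every vertex of S has an out-arc
  staying in S, and following these arcs closes a cycle. A-compatibility says that no arc leaves
  \<open>N\<^sub>i \<union> N\<^sub>0\<close>, which gives (i). For (ii), a counting argument shows that every
  element of B is the root of a component of the forest. A component rooted in \<open>N\<^sub>i\<close>
  (i > 0) must contain a node of F, and by (i) the only one it can contain is
  \<open>j\<^sub>i\<close>; two roots in \<open>N\<^sub>i\<close> would put \<open>j\<^sub>i\<close> into two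
  distinct components.\<close>

lemma funpow_apply_funpow: "(f ^^ m) ((f ^^ n) x) = (f ^^ (m + n)) x"
  by (simp add: funpow_add)

lemma funpow_minimal_period_distinct:
  assumes period: "(f ^^ p) y = y" and minimal: "\<And>q. 0 < q \<Longrightarrow> q < p \<Longrightarrow> (f ^^ q) y \<noteq> y"
    and "k < l" "l < k + p"
  shows "(f ^^ k) y \<noteq> (f ^^ l) y"
proof
  assume eq: "(f ^^ k) y = (f ^^ l) y"
  have multiple: "(f ^^ (n * p)) y = y" for n
    by (induction n) (simp_all add: funpow_add period)
  have "k * (p - 1) + k = k * p"
    using \<open>k < l\<close> \<open>l < k + p\<close> by (cases p) simp_all
  then have return: "(f ^^ (k * (p - 1))) ((f ^^ k) y) = y"
    by (simp add: funpow_apply_funpow multiple)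
  have "(f ^^ (l - k)) y = (f ^^ (l - k)) ((f ^^ (k * (p - 1))) ((f ^^ k) y))"
    by (simp only: return)
  also have "\<dots> = (f ^^ (k * (p - 1))) ((f ^^ (l - k)) ((f ^^ k) y))"
    by (simp only: funpow_apply_funpow ac_simps)
  also have "(f ^^ (l - k)) ((f ^^ k) y) = (f ^^ l) y"
    using \<open>k < l\<close> by (simp add: funpow_apply_funpow)
  also have "\<dots> = (f ^^ k) y"
    by (rule eq[symmetric])
  finally have "(f ^^ (l - k)) y = y" using return by simp
  then show False using minimal[of "l - k"] \<open>k < l\<close> \<open>l < k + p\<close> by simp
qed

lemma finite_self_map_periodic_point:
  assumes "finite W" "x \<in> W" "f ` W \<subseteq> W"
  obtains y p where "y \<in> W" "0 < p" "(f ^^ p) y = y"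
    "\<And>k l. k < l \<Longrightarrow> l < k + p \<Longrightarrow> (f ^^ k) y \<noteq> (f ^^ l) y"
proof -
  have orbit: "(f ^^ k) x \<in> W" for k
    by (induction k) (use assms in auto)
  have "\<not> inj_on (\<lambda>k. (f ^^ k) x) {..card W}"
  proof
    assume "inj_on (\<lambda>k. (f ^^ k) x) {..card W}"
    then have "card ((\<lambda>k. (f ^^ k) x) ` {..card W}) = Suc (card W)"
      by (simp add: card_image)
    moreover have "card ((\<lambda>k. (f ^^ k) x) ` {..card W}) \<le> card W"
      using orbit by (intro card_mono \<open>finite W\<close>) auto
    ultimately show False by simp
  qed
  then obtain i j where "i < j" "(f ^^ i) x = (f ^^ j) x"
    unfolding inj_on_def by (metis linorder_neqE_nat)
  define y where "y = (f ^^ i) x"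
  have "(f ^^ (j - i)) y = (f ^^ j) x"
    using \<open>i < j\<close> by (simp add: y_def funpow_apply_funpow)
  then have periodic: "\<exists>p. 0 < p \<and> (f ^^ p) y = y"
    using \<open>i < j\<close> \<open>(f ^^ i) x = (f ^^ j) x\<close> by (metis y_def zero_less_diff)
  define p where "p = (LEAST p. 0 < p \<and> (f ^^ p) y = y)"
  have p: "0 < p" "(f ^^ p) y = y"
    using LeastI_ex[OF periodic] by (simp_all add: p_def)
  have "(f ^^ q) y \<noteq> y" if "0 < q" "q < p" for q
    using not_less_Least[of q "\<lambda>p. 0 < p \<and> (f ^^ p) y = y"] that by (simp add: p_def)
  then show thesis
    using that[OF _ p] funpow_minimal_period_distinct[OF p(2)] orbit by (simp add: y_def)
qed

lemma ucycle_if_out_arc_closed: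
  assumes "finite W" "x \<in> W" and closed: "\<And>w. w \<in> W \<Longrightarrow> \<exists>e\<in>arcs H. tail H e = w \<and> head H e \<in> W"
  shows "\<exists>es vs. ucycle H es vs"
proof -
  obtain a where a: "\<And>w. w \<in> W \<Longrightarrow> a w \<in> arcs H \<and> tail H (a w) = w \<and> head H (a w) \<in> W"
    using closed by metis
  define f where "f w = head H (a w)" for w
  obtain y p where "y \<in> W" "0 < p" "(f ^^ p) y = y"
    and distinct: "\<And>k l. k < l \<Longrightarrow> l < k + p \<Longrightarrow> (f ^^ k) y \<noteq> (f ^^ l) y"
    using finite_self_map_periodic_point[OF assms(1,2), of f] a by (auto simp: f_def)
  have orbit: "(f ^^ k) y \<in> W" for k
    by (induction k) (use \<open>y \<in> W\<close> a in \<open>auto simp: f_def\<close>)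
  have window: "inj_on (\<lambda>k. (f ^^ k) y) {i..<i + p}" for i
    by (rule inj_onI, rule ccontr) (auto elim!: linorder_neqE_nat dest: distinct)
  define vs where "vs = map (\<lambda>k. (f ^^ k) y) [0..<Suc p]"
  define es where "es = map (\<lambda>k. a ((f ^^ k) y)) [0..<p]"
  have "ucycle H es vs"
    unfolding ucycle_def
  proof (intro conjI allI impI disjI1)
    show "es \<noteq> []" using \<open>0 < p\<close> by (simp add: es_def)
    have "inj_on (a \<circ> (\<lambda>k. (f ^^ k) y)) {0..<0 + p}"
      using window[of 0] a orbit by (intro comp_inj_on) (auto intro: inj_on_inverseI)
    then show "distinct es" by (simp add: es_def distinct_map comp_def)
    show "set es \<subseteq> arcs H" using a orbit by (auto simp: es_def)
    show "length vs = Suc (length es)" by (simp add: vs_def es_def)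
    have "hd vs = y" by (simp add: vs_def hd_map del: upt_Suc)
    moreover have "last vs = (f ^^ p) y" by (simp add: vs_def)
    ultimately show "hd vs = last vs" using \<open>(f ^^ p) y = y\<close> by simp
    have "tl vs = map (\<lambda>k. (f ^^ k) y) [1..<1 + p]"
      by (simp add: vs_def map_tl[symmetric] tl_upt del: upt_Suc)
    then show "distinct (tl vs)" using window[of 1] by (simp add: distinct_map del: upt_Suc)
    fix k assume "k < length es"
    then show "tail H (es ! k) = vs ! k" "head H (es ! k) = vs ! Suc k"
      using a[OF orbit[of k]] by (simp_all add: es_def vs_def f_def nth_map del: upt_Suc)
  qed
  then show ?thesis by blast
qed

lemma rooted_tree_root_in_out_closed:
  assumes root: "rooted_tree H r" and "finite S" "S \<subseteq> verts H" "v \<in> S"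
    and closed: "\<And>e. e \<in> arcs H \<Longrightarrow> tail H e \<in> S \<Longrightarrow> head H e \<in> S"
  shows "r \<in> S"
proof (rule ccontr)
  assume "r \<notin> S"
  have "\<exists>e\<in>arcs H. tail H e = w \<and> head H e \<in> S" if "w \<in> S" for w
  proof -
    have "out_arcs H w \<noteq> {}"
      using root \<open>S \<subseteq> verts H\<close> that \<open>r \<notin> S\<close> by (auto simp: rooted_tree_def)
    then obtain e where "e \<in> arcs H" "tail H e = w" by (auto simp: out_arcs_def)
    then show ?thesis using closed that by blast
  qed
  then have "\<exists>es vs. ucycle H es vs"
    by (rule ucycle_if_out_arc_closed[OF \<open>finite S\<close> \<open>v \<in> S\<close>])
  then show False using root by (auto simp: rooted_tree_def utree_def uacyclic_def)
qed

lemma rooted_tree_root_unique: "rooted_tree T x \<Longrightarrow> rooted_tree T y \<Longrightarrow> x = y"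
  by (auto simp: rooted_tree_def)

lemma ucomponent_eq_induce: "T \<in> ucomponents Z \<Longrightarrow> T = Z \<restriction> verts T"
  by (auto simp: ucomponents_def)

lemma ucomponent_verts_subset: "T \<in> ucomponents Z \<Longrightarrow> verts T \<subseteq> verts Z"
  by (auto simp: ucomponents_def)

lemma ucomponents_eq_if_common_vertex:
  assumes "T1 \<in> ucomponents Z" "T2 \<in> ucomponents Z" "w \<in> verts T1" "w \<in> verts T2"
  shows "T1 = T2"
proof -
  let ?R = "(uadj Z)\<^sup>*"
  have "sym ?R" by (rule sym_rtrancl) (auto simp: sym_def uadj_def)
  obtain u1 u2 where u1: "T1 = Z \<restriction> {v \<in> verts Z. (u1, v) \<in> ?R}"
    and u2: "T2 = Z \<restriction> {v \<in> verts Z. (u2, v) \<in> ?R}"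
    using assms(1,2) by (auto simp: ucomponents_def)
  have "(u1, w) \<in> ?R" "(u2, w) \<in> ?R" using assms(3,4) u1 u2 by auto
  then have "(u1, u2) \<in> ?R" "(u2, u1) \<in> ?R"
    using \<open>sym ?R\<close> by (auto intro: rtrancl_trans simp: sym_def)
  then have "{v \<in> verts Z. (u1, v) \<in> ?R} = {v \<in> verts Z. (u2, v) \<in> ?R}"
    by (auto intro: rtrancl_trans)
  then show ?thesis using u1 u2 by simp
qed

lemma Theta_root_of_some_component:
  assumes "Z \<in> Theta G F B" "finite (verts G)" "B \<subseteq> verts G" "x \<in> B"
  shows "\<exists>T\<in>ucomponents Z. rooted_tree T x"
proof -
  let ?C = "ucomponents Z"
  have card: "card ?C = card B"
    and rooted: "\<And>T. T \<in> ?C \<Longrightarrow> \<exists>r\<in>B. rooted_tree T r"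
    using assms(1) by (auto simp: Theta_def)
  obtain root where root: "\<And>T. T \<in> ?C \<Longrightarrow> root T \<in> B \<and> rooted_tree T (root T)"
    using rooted by metis
  have "inj_on root ?C"
  proof (rule inj_onI)
    fix T1 T2 assume "T1 \<in> ?C" "T2 \<in> ?C" "root T1 = root T2"
    moreover have "root T1 \<in> verts T1" "root T2 \<in> verts T2"
      using root \<open>T1 \<in> ?C\<close> \<open>T2 \<in> ?C\<close> by (auto simp: rooted_tree_def)
    ultimately show "T1 = T2" by (metis ucomponents_eq_if_common_vertex)
  qed
  then have "card (root ` ?C) = card B" by (simp add: card_image card)
  moreover have "root ` ?C \<subseteq> B" using root by blast
  moreover have "finite B" using assms(2,3) by (rule finite_subset[rotated])
  ultimately have "root ` ?C = B" by (simp add: card_subset_eq)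
  then show ?thesis using root \<open>x \<in> B\<close> by force
qed

lemma msum_eq: "msum d ms = ms 0 + (\<Sum>j\<in>{1..d}. ms j)"
  unfolding msum_def by (simp add: atMost_atLeast0 sum.atLeast_Suc_atMost)

lemma prefix_sums_cover:
  fixes ms :: "nat \<Rightarrow> nat"
  assumes "1 \<le> v" "v \<le> (\<Sum>j\<in>{1..n}. ms j)"
  shows "\<exists>j\<in>{1..n}. (\<Sum>k\<in>{1..<j}. ms k) < v \<and> v \<le> (\<Sum>k\<in>{1..j}. ms k)"
  using assms
proof (induction n)
  case (Suc n)
  show ?case
  proof (cases "v \<le> (\<Sum>j\<in>{1..n}. ms j)")
    case True then show ?thesis using Suc by force
  next
    case False
    moreover have "{1..<Suc n} = {1..n}" by auto
    ultimately show ?thesis using Suc.prems by (intro bexI[of _ "Suc n"]) auto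
  qed
qed simp

lemma Nblk_cover:
  assumes "v \<in> {1..msum d ms + 1}"
  obtains j where "j \<le> d" "v \<in> Nblk d ms j"
proof (cases "v \<le> (\<Sum>j\<in>{1..d}. ms j)")
  case True
  then obtain j where "j \<in> {1..d}" "(\<Sum>k\<in>{1..<j}. ms k) < v" "v \<le> (\<Sum>k\<in>{1..j}. ms k)"
    using prefix_sums_cover[where v = v and n = d and ms = ms] assms by auto
  then show thesis using that[of j] by (auto simp: Nblk_def)
next
  case False
  then show thesis using that[of 0] assms by (auto simp: Nblk_def msum_eq)
qed

lemma Nblk_disjoint_less:
  assumes "i < k" "k \<le> d"
  shows "Nblk d ms i \<inter> Nblk d ms k = {}"
proof (cases "i = 0")
  case True
  have "(\<Sum>j\<in>{1..k}. ms j) \<le> (\<Sum>j\<in>{1..d}. ms j)" using assms by (intro sum_mono2) auto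
  then show ?thesis using True assms by (auto simp: Nblk_def msum_eq)
next
  case False
  have "(\<Sum>j\<in>{1..i}. ms j) \<le> (\<Sum>j\<in>{1..<k}. ms j)" using assms by (intro sum_mono2) auto
  then show ?thesis using False assms by (auto simp: Nblk_def)
qed

lemma Nblk_disjoint:
  assumes "i \<le> d" "k \<le> d" "i \<noteq> k"
  shows "Nblk d ms i \<inter> Nblk d ms k = {}"
  using assms Nblk_disjoint_less[of i k d ms] Nblk_disjoint_less[of k i d ms]
  by (cases "i < k") auto

lemma A_compatible_arc_closed:
  assumes "wf_digraph G" "verts G = {1..msum d ms + 1}" and compat: "A_compatible d ms js A b G \<pi>"
    and "i \<le> d" "e \<in> arcs G" and tail: "tail G e \<in> Nblk d ms i \<union> Nblk d ms 0"
  shows "head G e \<in> Nblk d ms i \<union> Nblk d ms 0"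
proof -
  have "head G e \<in> verts G" using assms(1,5) by (rule wf_digraph.head_in_verts)
  then obtain j where "j \<le> d" "head G e \<in> Nblk d ms j"
    using Nblk_cover assms(2) by metis
  moreover have "\<not> (tail G e \<in> Nblk d ms l \<and> head G e \<in> Nblk d ms j)"
    if "l \<le> d" "j \<in> {1..d}" "l \<noteq> j" for l
    using compat \<open>e \<in> arcs G\<close> that unfolding A_compatible_def by (meson atLeastAtMost_iff le0)
  ultimately show ?thesis using tail \<open>i \<le> d\<close> by (cases "j = 0 \<or> j = i") auto
qed

lemma root_in_block_or_Nblk0:
  assumes "verts G = {1..msum d ms + 1}" "A_compatible d ms js A b G \<pi>"
    and forest: "spanning_forest Z G" and T: "T \<in> ucomponents Z" and root: "rooted_tree T r"
    and "i \<le> d" "v \<in> verts T" "v \<in> Nblk d ms i"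
  shows "r \<in> Nblk d ms i \<union> Nblk d ms 0"
proof -
  let ?S = "verts T \<inter> (Nblk d ms i \<union> Nblk d ms 0)"
  have "subgraph Z G" "verts Z = verts G"
    using forest by (auto simp: spanning_forest_def spanning_def)
  then have G: "wf_digraph G" "arcs Z \<subseteq> arcs G" "tail Z = tail G" "head Z = head G"
    by (auto simp: subgraph_def compatible_def)
  have "finite ?S"
    using ucomponent_verts_subset[OF T] \<open>verts Z = verts G\<close> assms(1)
    by (auto intro: finite_subset)
  moreover have T_arcs: "arcs T = {e \<in> arcs Z. tail Z e \<in> verts T \<and> head Z e \<in> verts T}"
    and "tail T = tail Z" "head T = head Z"
    by (subst ucomponent_eq_induce[OF T], simp)+
  then have "head T e \<in> ?S" if "e \<in> arcs T" "tail T e \<in> ?S" for e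
    using A_compatible_arc_closed[OF G(1) assms(1,2) \<open>i \<le> d\<close>, of e] that G by auto
  ultimately show ?thesis
    using rooted_tree_root_in_out_closed[OF root, of ?S v] assms(7,8) by blast
qed

lemma component_rooted_in_block_contains_js:
  assumes js_in: "\<forall>i\<in>{1..d}. js i \<in> Nblk d ms i"
    and G: "verts G = {1..msum d ms + 1}" "A_compatible d ms js A b G \<pi>"
    and forest: "spanning_forest Z G" and T: "T \<in> ucomponents Z" and root: "rooted_tree T r"
    and "i \<in> {1..d}" "r \<in> Nblk d ms i" and "f \<in> Fset d ms js" "f \<in> verts T"
  shows "js i \<in> verts T"
proof -
  have "r \<notin> Nblk d ms 0" using Nblk_disjoint[of 0 d i ms] \<open>i \<in> {1..d}\<close> \<open>r \<in> Nblk d ms i\<close> by auto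
  from \<open>f \<in> Fset d ms js\<close> consider l where "l \<in> {1..d}" "f = js l" | "f = msum d ms + 1"
    by (auto simp: Fset_def)
  then show ?thesis
  proof cases
    case 1
    then have "r \<in> Nblk d ms l"
      using root_in_block_or_Nblk0[OF G forest T root, of l f] js_in \<open>f \<in> verts T\<close> \<open>r \<notin> Nblk d ms 0\<close>
      by auto
    then have "l = i"
      using Nblk_disjoint[of l d i ms] \<open>l \<in> {1..d}\<close> \<open>i \<in> {1..d}\<close> \<open>r \<in> Nblk d ms i\<close> by auto
    then show ?thesis using 1 \<open>f \<in> verts T\<close> by simp
  next
    case 2
    then have "f \<in> Nblk d ms 0" by (simp add: Nblk_def)
    then show ?thesis
      using root_in_block_or_Nblk0[OF G forest T root, of 0 f] \<open>f \<in> verts T\<close> \<open>r \<notin> Nblk d ms 0\<close>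
      by auto
  qed
qed

lemma Theta_empty_if_two_roots_in_block:
  assumes js_in: "\<forall>i\<in>{1..d}. js i \<in> Nblk d ms i"
    and G: "verts G = {1..msum d ms + 1}" "A_compatible d ms js A b G \<pi>"
    and "B \<subseteq> verts G" "i \<in> {1..d}"
    and "x \<in> B" "y \<in> B" "x \<noteq> y" "x \<in> Nblk d ms i" "y \<in> Nblk d ms i"
  shows "Theta G (Fset d ms js) B = {}"
proof (rule ccontr)
  assume "Theta G (Fset d ms js) B \<noteq> {}"
  then obtain Z where Z: "Z \<in> Theta G (Fset d ms js) B" by blast
  then have forest: "spanning_forest Z G"
    and meets_F: "\<And>T. T \<in> ucomponents Z \<Longrightarrow> \<exists>f\<in>Fset d ms js. f \<in> verts T"
    by (auto simp: Theta_def)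
  have contains_js: "js i \<in> verts T"
    if "T \<in> ucomponents Z" "rooted_tree T r" "r \<in> Nblk d ms i" for T r
    using component_rooted_in_block_contains_js[OF js_in G forest that(1,2) \<open>i \<in> {1..d}\<close> that(3)]
      meets_F[OF that(1)] by blast
  obtain Tx Ty where "Tx \<in> ucomponents Z" "rooted_tree Tx x" "Ty \<in> ucomponents Z" "rooted_tree Ty y"
    using Theta_root_of_some_component[OF Z] G(1) \<open>B \<subseteq> verts G\<close> \<open>x \<in> B\<close> \<open>y \<in> B\<close> by (metis finite_atLeastAtMost)
  moreover have "Tx = Ty"
    using calculation contains_js \<open>x \<in> Nblk d ms i\<close> \<open>y \<in> Nblk d ms i\<close>
    by (metis ucomponents_eq_if_common_vertex)
  ultimately show False using rooted_tree_root_unique \<open>x \<noteq> y\<close> by metis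
qed

theorem lemma4p5:
  fixes d :: nat and ms :: "nat \<Rightarrow> nat" and js :: "nat \<Rightarrow> nat"
    and A :: "nat \<Rightarrow> nat \<Rightarrow> 'a::ordered_comm_ring" and b :: "nat \<Rightarrow> 'a"
    and G :: "(nat,'e) pre_digraph" and \<pi> :: "'e \<Rightarrow> 'a"
  assumes blocks: "block_form d ms A b"
    and js_in: "\<forall>i\<in>{1..d}. js i \<in> Nblk d ms i"
    and b_zero: "\<forall>j\<in>{1..msum d ms - ms 0}. j \<notin> js ` {1..d} \<longrightarrow> b j = 0"
    and G_graph: "loopfree_digraph G" "finite (arcs G)" "verts G = {1..msum d ms + 1}"
    and compat: "A_compatible d ms js A b G \<pi>"
  shows "(\<forall>Z T r i. spanning_forest Z G \<longrightarrow> T \<in> ucomponents Z \<longrightarrow> rooted_tree T r \<longrightarrow>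
            i \<le> d \<longrightarrow> verts T \<inter> Nblk d ms i \<noteq> {} \<longrightarrow> r \<in> Nblk d ms i \<union> Nblk d ms 0)
       \<and> (\<forall>B. B \<subseteq> verts G \<longrightarrow> card B = card (Fset d ms js) \<longrightarrow>
            (\<exists>i\<in>{1..d}. \<exists>x\<in>B. \<exists>y\<in>B. x \<noteq> y \<and> x \<in> Nblk d ms i \<and> y \<in> Nblk d ms i) \<longrightarrow>
            Theta G (Fset d ms js) B = {})"
  using root_in_block_or_Nblk0[OF G_graph(3) compat]
    Theta_empty_if_two_roots_in_block[OF js_in G_graph(3) compat]
  by blast

end
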